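(* Let $(N_1,m_1)$ and $(N_2,m_2)$ be labeled marked Petri nets and $E$ a system of linear constraints such that $(N_1,m_1)\vartriangleright_E(N_2,m_2)$. Then for every $m_1'\in R(N_1,m_1)$ there is $m_2'\in R(N_2,m_2)$ such that $m_1'\uplus m_2'\models E$.
   Context: A Petri net $N=(P,T,\mathrm{Pre},\mathrm{Post})$ has a finite set of places $P$, a finite set of transitions $T$ disjoint from $P$, and flow functions $\mathrm{Pre},\mathrm{Post}:T\to(P\to\mathbb N)$. A marking is a map $m:P\to\mathbb N$. Transition $t$ is enabled at $m$ if $m(p)\ge\mathrm{Pre}(t,p)$ for all $p$; firing it yields $m'=m-\mathrm{Pre}(t)+\mathrm{Post}(t)$. A firing sequence $\varrho$ leads from $m$ to $m'$ ($m\overset{\varrho}{\Rightarrow}m'$) if its transitions can be fired successively from $m$ reaching $m'$; $R(N,m_0)$ is the set of markings reachable from $m_0$. A labeled net has a labeling $l:T\to\Sigma\cup\{\tau\}$ ($\tau\notin\Sigma$ silent), extended to sequences by $l(\epsilon)=\epsilon$, $\tau$ mapped to $\epsilon$, $l(\varrho t)=l(\varrho)l(t)$. Formulas are Boolean combinations of linear (in)equalities over integer variables; place names are used as variables. For a marking $m$ over $P$, $\underline m\triangleq\bigwedge_{p\in P}(p=m(p))$; $m\models\phi$ means $\phi\wedge\underline m$ is satisfiable over the integers. Markings $m_1$ over $P_1$, $m_2$ over $P_2$ are compatible if they agree on $P_1\cap P_2$; then $m_1\uplus m_2$ is the marking on $P_1\cup P_2$ agreeing with both; $m_1\uplus m_2\models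 E$ presupposes compatibility. $E$-abstraction (for $N_1,N_2$ with labelings $l_1,l_2$ over the same alphabet): $(N_1,m_1)\sqsupseteq_E(N_2,m_2)$ iff (A1) $m_1\uplus m_2\models E$; and (A2) for every firing sequence $m_1\overset{\varrho_1}{\Rightarrow}m_1'$ in $N_1$ there is at least one marking $m_2'$ over $P_2$ with $m_1'\uplus m_2'\models E$, and for every marking $m_2'$ over $P_2$ with $m_1'\uplus m_2'\models E$ there is a firing sequence $\varrho_2$ of $N_2$ with $m_2\overset{\varrho_2}{\Rightarrow}m_2'$ and $l_1(\varrho_1)=l_2(\varrho_2)$. $(N_1,m_1)\vartriangleright_E(N_2,m_2)$ means both directions hold. *)

theory Defs
  imports Main
begin

text \<open>A labeled Petri net with places of type 'p, transitions of type 't and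
  labels of type 'a. The label None stands for the silent label tau.\<close>
record ('p, 't, 'a) lpnet =
  places :: "'p set"
  trans  :: "'t set"
  pre    :: "'t \<Rightarrow> 'p \<Rightarrow> nat"
  post   :: "'t \<Rightarrow> 'p \<Rightarrow> nat"
  lab    :: "'t \<Rightarrow> 'a option"

definition petri_net :: "('p, 't, 'a) lpnet \<Rightarrow> bool" where
  "petri_net N \<longleftrightarrow> finite (places N) \<and> finite (trans N)"

text \<open>A marking over a place set P: a map P -> nat, represented as a total
  function that is 0 outside P.\<close>
definition marking_on :: "'p set \<Rightarrow> ('p \<Rightarrow> nat) \<Rightarrow> bool" where
  "marking_on P m \<longleftrightarrow> (\<forall>p. p \<notin> P \<longrightarrow> m p = 0)"

definition enabled :: "('p, 't, 'a) lpnet \<Rightarrow> ('p \<Rightarrow> nat) \<Rightarrow> 't \<Rightarrow> bool" where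
  "enabled N m t \<longleftrightarrow> t \<in> trans N \<and> (\<forall>p \<in> places N. pre N t p \<le> m p)"

definition fire :: "('p, 't, 'a) lpnet \<Rightarrow> ('p \<Rightarrow> nat) \<Rightarrow> 't \<Rightarrow> ('p \<Rightarrow> nat)" where
  "fire N m t = (\<lambda>p. if p \<in> places N then m p - pre N t p + post N t p else m p)"

fun fires :: "('p, 't, 'a) lpnet \<Rightarrow> ('p \<Rightarrow> nat) \<Rightarrow> 't list \<Rightarrow> ('p \<Rightarrow> nat) \<Rightarrow> bool" where
  "fires N m [] m' \<longleftrightarrow> m' = m"
| "fires N m (t # ts) m' \<longleftrightarrow> enabled N m t \<and> fires N (fire N m t) ts m'"

definition reach :: "('p, 't, 'a) lpnet \<Rightarrow> ('p \<Rightarrow> nat) \<Rightarrow> ('p \<Rightarrow> nat) set" where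
  "reach N m = {m'. \<exists>\<rho>. fires N m \<rho> m'}"

fun labels :: "('p, 't, 'a) lpnet \<Rightarrow> 't list \<Rightarrow> 'a list" where
  "labels N [] = []"
| "labels N (t # ts) = (case lab N t of None \<Rightarrow> labels N ts | Some a \<Rightarrow> a # labels N ts)"

datatype 'v lformula =
    LLeq "(int \<times> 'v) list" int
  | LEq "(int \<times> 'v) list" int
  | LTrue
  | LNot "'v lformula"
  | LAnd "'v lformula" "'v lformula"
  | LOr "'v lformula" "'v lformula"

definition lsum :: "(int \<times> 'v) list \<Rightarrow> ('v \<Rightarrow> int) \<Rightarrow> int" where
  "lsum cs \<sigma> = (\<Sum>(c, x) \<leftarrow> cs. c * \<sigma> x)"

fun leval :: "'v lformula \<Rightarrow> ('v \<Rightarrow> int) \<Rightarrow> bool" where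
  "leval (LLeq cs b) \<sigma> \<longleftrightarrow> lsum cs \<sigma> \<le> b"
| "leval (LEq cs b) \<sigma> \<longleftrightarrow> lsum cs \<sigma> = b"
| "leval LTrue \<sigma> \<longleftrightarrow> True"
| "leval (LNot f) \<sigma> \<longleftrightarrow> \<not> leval f \<sigma>"
| "leval (LAnd f g) \<sigma> \<longleftrightarrow> leval f \<sigma> \<and> leval g \<sigma>"
| "leval (LOr f g) \<sigma> \<longleftrightarrow> leval f \<sigma> \<or> leval g \<sigma>"

text \<open>m over P models phi: phi together with (p = m p for all p in P) is
  satisfiable over the integers. Place names are variables.\<close>
definition models :: "'p set \<Rightarrow> ('p \<Rightarrow> nat) \<Rightarrow> 'p lformula \<Rightarrow> bool" where
  "models P m \<phi> \<longleftrightarrow> (\<exists>\<sigma>. (\<forall>p \<in> P. \<sigma> p = int (m p)) \<and> leval \<phi> \<sigma>)"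

definition compatible :: "'p set \<Rightarrow> ('p \<Rightarrow> nat) \<Rightarrow> 'p set \<Rightarrow> ('p \<Rightarrow> nat) \<Rightarrow> bool" where
  "compatible P1 m1 P2 m2 \<longleftrightarrow> (\<forall>p \<in> P1 \<inter> P2. m1 p = m2 p)"

definition munion :: "'p set \<Rightarrow> ('p \<Rightarrow> nat) \<Rightarrow> ('p \<Rightarrow> nat) \<Rightarrow> ('p \<Rightarrow> nat)" where
  "munion P1 m1 m2 = (\<lambda>p. if p \<in> P1 then m1 p else m2 p)"

text \<open>m1 (+) m2 |= E, presupposing compatibility.\<close>
definition union_models ::
  "'p set \<Rightarrow> ('p \<Rightarrow> nat) \<Rightarrow> 'p set \<Rightarrow> ('p \<Rightarrow> nat) \<Rightarrow> 'p lformula \<Rightarrow> bool" where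
  "union_models P1 m1 P2 m2 E \<longleftrightarrow>
     compatible P1 m1 P2 m2 \<and> models (P1 \<union> P2) (munion P1 m1 m2) E"

definition abstracts ::
  "('p, 't1, 'a) lpnet \<Rightarrow> ('p \<Rightarrow> nat) \<Rightarrow> 'p lformula \<Rightarrow> ('p, 't2, 'a) lpnet \<Rightarrow> ('p \<Rightarrow> nat) \<Rightarrow> bool" where
  "abstracts N1 m1 E N2 m2 \<longleftrightarrow>
     union_models (places N1) m1 (places N2) m2 E \<and>
     (\<forall>\<rho>1 m1'. fires N1 m1 \<rho>1 m1' \<longrightarrow>
        (\<exists>m2'. marking_on (places N2) m2' \<and> union_models (places N1) m1' (places N2) m2' E) \<and>
        (\<forall>m2'. marking_on (places N2) m2' \<and> union_models (places N1) m1' (places N2) m2' E \<longrightarrow>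
           (\<exists>\<rho>2. fires N2 m2 \<rho>2 m2' \<and> labels N1 \<rho>1 = labels N2 \<rho>2)))"

definition equiv_abs ::
  "('p, 't1, 'a) lpnet \<Rightarrow> ('p \<Rightarrow> nat) \<Rightarrow> 'p lformula \<Rightarrow> ('p, 't2, 'a) lpnet \<Rightarrow> ('p \<Rightarrow> nat) \<Rightarrow> bool" where
  "equiv_abs N1 m1 E N2 m2 \<longleftrightarrow> abstracts N1 m1 E N2 m2 \<and> abstracts N2 m2 E N1 m1"

end

theory Submission
  imports Defs
begin

lemma abstracts_reach_related:
  assumes abs: "abstracts N1 m1 E N2 m2" and "m1' \<in> reach N1 m1"
  shows "\<exists>m2' \<in> reach N2 m2. union_models (places N1) m1' (places N2) m2' E"
proof -
  obtain \<rho>1 where \<rho>1: "fires N1 m1 \<rho>1 m1'"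
    using \<open>m1' \<in> reach N1 m1\<close> by (auto simp: reach_def)
  obtain m2' where "marking_on (places N2) m2'"
    and related: "union_models (places N1) m1' (places N2) m2' E"
    using abs \<rho>1 unfolding abstracts_def by blast
  then obtain \<rho>2 where "fires N2 m2 \<rho>2 m2'"
    using abs \<rho>1 unfolding abstracts_def by blast
  then have "m2' \<in> reach N2 m2"
    by (auto simp: reach_def)
  with related show ?thesis
    by blast
qed

text \<open>Only the direction N1 over N2 of the equivalence is needed.\<close>

theorem lemma1:
  fixes N1 :: "('p, 't1, 'a) lpnet" and N2 :: "('p, 't2, 'a) lpnet"
    and m1 m2 :: "'p \<Rightarrow> nat" and E :: "'p lformula"
  assumes "petri_net N1" and "petri_net N2"
    and "marking_on (places N1) m1" and "marking_on (places N2) m2"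
    and "equiv_abs N1 m1 E N2 m2"
  shows "\<forall>m1' \<in> reach N1 m1. \<exists>m2' \<in> reach N2 m2.
           union_models (places N1) m1' (places N2) m2' E"
  using \<open>equiv_abs N1 m1 E N2 m2\<close> abstracts_reach_related
  unfolding equiv_abs_def by blast

end
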